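(* Fix real parameters $A,B$ (the conserved momenta $p_\psi,p_\phi$ of the Lagrange top) and consider the reduced phase space with canonical coordinates $(\theta,p_\theta)$, $\theta\in(0,\pi)$, $\{\theta,p_\theta\}=1$, and the Hamiltonian $$H(\theta,p_\theta)=p_\theta^2+\frac{A^2+2AB\cos\theta+B^2}{\sin^2\theta}+\cos\theta .$$ Put $u=\cos\theta$, $v=\sin\theta\,p_\theta$, and for $E\in\mathbb R$ let $X_E$ be the elliptic curve $$X_E:\ y^2=f_E(x),\qquad f_E(x)=x^3-Ex^2-(1+2AB)x+E-A^2-B^2 ,$$ with its group law whose neutral element is the point at infinity (three affine points sum to zero iff they are collinear, and $-(x,y)=(x,-y)$). Then $P=(u,v)$ lies on $X_{H(\theta,p_\theta)}$. Define a point $(\tilde u,\tilde v)\in X_{H(\theta,p_\theta)}$ in one of three ways: 1. (addition) $(\tilde u,\tilde v)=P+P'$, where $P'=(\lambda,\mu)$, $\lambda$ is a fixed real parameter and $\mu=\mu(\theta,p_\theta)$ is a (locally smooth) branch of $\sqrt{f_{H(\theta,p_\theta)}(\lambda)}$; explicitly, with $m=(v-\mu)/(u-\lambda)$ and $H=H(\theta,p_\theta)$, $$\tilde u=-u-\lambda+H+m^2,\qquad \tilde v=-v-m(\tilde u-u);$$ 2. (doubling) $(\tilde u,\tilde v)=[2]P$; explicitly, with $m=\dfrac{3u^2-2Hu-1-2AB}{2v}$, $$\tilde u=-2u+H+m^2,\qquad \tilde v=-v-m(\tilde u-u);$$ 3. (tripling) $(\tilde u,\tilde v)=[3]P$. Define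 $(\tilde\theta,\tilde p_\theta)$ by $\cos\tilde\theta=\tilde u$, $\sin\tilde\theta\,\tilde p_\theta=\tilde v$ (on the open set where these are defined and $|\tilde u|<1$). Then the map $(\theta,p_\theta)\mapsto(\tilde\theta,\tilde p_\theta)$ is a canonical transformation of valence $c$, i.e. $\{\tilde\theta,\tilde p_\theta\}=c$, with $c=1,2,3$ in cases 1, 2, 3 respectively, and it preserves the Hamiltonian: $H(\tilde\theta,\tilde p_\theta)=H(\theta,p_\theta)$ (so it is an auto-Bäcklund transformation of the Lagrange top).
   Context: A canonical transformation of valence $c$ is a map $(q,p)\mapsto(\tilde q,\tilde p)$ whose Jacobian matrix $V$ satisfies $V^\top\Omega V=c\,\Omega$ with $\Omega=\begin{pmatrix}0&I\\-I&0\end{pmatrix}$; equivalently the canonical Poisson brackets of the new variables are $c$ times the canonical ones. An auto-Bäcklund transformation (in the Toda–Wadati sense) is a canonical transformation preserving the form of the Hamiltonian(s). The full Lagrange top Hamiltonian in Euler angles is $p_\theta^2+\frac{p_\phi^2+2\cos\theta\,p_\phi p_\psi+p_\psi^2}{\sin^2\theta}+\cos\theta$, with $A=p_\psi$, $B=p_\phi$ conserved. *)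

theory Defs
  imports "HOL-Analysis.Analysis"
begin

definition Hred :: "real \<Rightarrow> real \<Rightarrow> real \<times> real \<Rightarrow> real" where
  "Hred A B z = (snd z)\<^sup>2 + (A\<^sup>2 + 2*A*B*cos (fst z) + B\<^sup>2) / (sin (fst z))\<^sup>2 + cos (fst z)"

definition fE :: "real \<Rightarrow> real \<Rightarrow> real \<Rightarrow> real \<Rightarrow> real" where
  "fE A B E x = x^3 - E*x\<^sup>2 - (1 + 2*A*B)*x + E - A\<^sup>2 - B\<^sup>2"

definition on_curve :: "real \<Rightarrow> real \<Rightarrow> real \<Rightarrow> real \<times> real \<Rightarrow> bool" where
  "on_curve A B E P \<longleftrightarrow> (snd P)\<^sup>2 = fE A B E (fst P)"

text \<open>The x^2-coefficient of f_E is -E, so the three collinear abscissae sum to E.\<close>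
definition ec_add :: "real \<Rightarrow> real \<times> real \<Rightarrow> real \<times> real \<Rightarrow> real \<times> real" where
  "ec_add E P Q = (let m = (snd P - snd Q) / (fst P - fst Q);
                       x3 = - fst P - fst Q + E + m\<^sup>2
                   in (x3, - snd P - m * (x3 - fst P)))"

definition ec_double :: "real \<Rightarrow> real \<Rightarrow> real \<Rightarrow> real \<times> real \<Rightarrow> real \<times> real" where
  "ec_double A B E P = (let m = (3 * (fst P)\<^sup>2 - 2 * E * fst P - 1 - 2*A*B) / (2 * snd P);
                           x3 = - 2 * fst P + E + m\<^sup>2
                       in (x3, - snd P - m * (x3 - fst P)))"

definition ec_triple :: "real \<Rightarrow> real \<Rightarrow> real \<Rightarrow> real \<times> real \<Rightarrow> real \<times> real" where
  "ec_triple A B E P = ec_add E P (ec_double A B E P)"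

definition to_uv :: "real \<times> real \<Rightarrow> real \<times> real" where
  "to_uv z = (cos (fst z), sin (fst z) * snd z)"

definition from_uv :: "real \<times> real \<Rightarrow> real \<times> real" where
  "from_uv w = (arccos (fst w), snd w / sin (arccos (fst w)))"

definition poisson :: "(real \<times> real \<Rightarrow> real) \<Rightarrow> (real \<times> real \<Rightarrow> real) \<Rightarrow> real \<times> real \<Rightarrow> real" where
  "poisson F G z =
     frechet_derivative F (at z) (1, 0) * frechet_derivative G (at z) (0, 1)
   - frechet_derivative F (at z) (0, 1) * frechet_derivative G (at z) (1, 0)"

definition canonical_valence :: "real \<Rightarrow> (real \<times> real \<Rightarrow> real \<times> real) \<Rightarrow> (real \<times> real) set \<Rightarrow> bool" where
  "canonical_valence c T U \<longleftrightarrow>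
     (\<forall>z\<in>U. T differentiable (at z) \<and> poisson (\<lambda>w. fst (T w)) (\<lambda>w. snd (T w)) z = c)"

end

theory Submission
  imports Defs
begin

(* Then {u, v} = -(1 - u^2), and the Hamiltonian flow
   of H moves the point (u, v) of X_H with velocity -(2v, f_H'(u)), i.e. along the invariant vector
   field of the curve.  The chord-tangent law is compatible with this motion: if P and Q move at rates
   a and b, then P + Q moves at rate a + b and [2]P at rate 2a.  If a point (x, y) stays on X_H and
   moves at rate c, then differentiating y^2 = f_H(x) and pairing with dH gives {x, y} = -c (1 - x^2)
   wherever dH does not vanish, and this says exactly that (arccos x, y / sqrt (1 - x^2)) has bracket c.
   Since H is determined by any point of X_H with |x| < 1, the maps also preserve H. *)

section \<open>Gradients and the Poisson bracket\<close>

definition wedge :: "real \<times> real \<Rightarrow> real \<times> real \<Rightarrow> real" where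
  "wedge g h = fst g * snd h - snd g * fst h"

lemma wedge_bilinear:
  "wedge (g + h) k = wedge g k + wedge h k"  "wedge k (g + h) = wedge k g + wedge k h"
  "wedge (g - h) k = wedge g k - wedge h k"  "wedge k (g - h) = wedge k g - wedge k h"
  "wedge (- g) k = - wedge g k"              "wedge k (- g) = - wedge k g"
  "wedge (a *\<^sub>R g) k = a * wedge g k"       "wedge k (a *\<^sub>R g) = a * wedge k g"
  "wedge 0 k = 0"  "wedge k 0 = 0"  "wedge g g = 0"
  by (simp_all add: wedge_def algebra_simps)

lemma wedge_antisym: "wedge h g = - wedge g h"
  by (simp add: wedge_def)

lemma wedge_scaleR_expand: "wedge g h *\<^sub>R k = wedge k h *\<^sub>R g + wedge g k *\<^sub>R h"
  by (simp add: wedge_def prod_eq_iff algebra_simps)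

lemma GDERIV_fst: "GDERIV (\<lambda>w. fst w) z :> (1, 0)"
  unfolding gderiv_def by (rule has_derivative_eq_rhs, rule has_derivative_fst[OF has_derivative_ident]) auto

lemma GDERIV_snd: "GDERIV (\<lambda>w. snd w) z :> (0, 1)"
  unfolding gderiv_def by (rule has_derivative_eq_rhs, rule has_derivative_snd[OF has_derivative_ident]) auto

lemma GDERIV_divide:
  assumes "GDERIV f z :> df" "GDERIV g z :> dg" "g z \<noteq> 0"
  obtains dq where "GDERIV (\<lambda>w. f w / g w) z :> dq" and "g z *\<^sub>R dq = df - (f z / g z) *\<^sub>R dg"
proof
  show "GDERIV (\<lambda>w. f w / g w) z :> (1 / g z) *\<^sub>R df - (f z / (g z)\<^sup>2) *\<^sub>R dg"
    using GDERIV_mult[OF assms(1) GDERIV_inverse[OF assms(2,3)]] assms(3)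
    by (simp add: divide_inverse power2_eq_square algebra_simps)
  show "g z *\<^sub>R ((1 / g z) *\<^sub>R df - (f z / (g z)\<^sup>2) *\<^sub>R dg) = df - (f z / g z) *\<^sub>R dg"
    using assms(3) by (simp add: power2_eq_square algebra_simps)
qed

lemma GDERIV_power2: "GDERIV f z :> df \<Longrightarrow> GDERIV (\<lambda>w. (f w)\<^sup>2) z :> (2 * f z) *\<^sub>R df"
  using GDERIV_mult[of f z df f df] by (simp add: power2_eq_square scaleR_2 flip: scaleR_add_left)

lemma GDERIV_unique: "GDERIV f z :> g \<Longrightarrow> GDERIV f z :> h \<Longrightarrow> g = h"
proof -
  assume "GDERIV f z :> g" "GDERIV f z :> h"
  then have "(\<lambda>d. inner d g) = (\<lambda>d. inner d h)"
    unfolding gderiv_def by (rule has_derivative_unique)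
  from fun_cong[OF this, of "g - h"] show "g = h"
    by (metis eq_iff_diff_eq_0 inner_diff_right inner_eq_zero_iff)
qed

lemma GDERIV_transform_open:
  assumes "GDERIV f z :> g" and "open U" and "z \<in> U" and "\<And>w. w \<in> U \<Longrightarrow> f w = h w"
  shows "GDERIV h z :> g"
  using assms unfolding gderiv_def by (rule has_derivative_transform_within_open)

lemma differentiable_imp_GDERIV:
  fixes f :: "real \<times> real \<Rightarrow> real"
  assumes "f differentiable (at z)"
  shows "\<exists>g. GDERIV f z :> g"
proof -
  let ?D = "frechet_derivative f (at z)"
  have D: "(f has_derivative ?D) (at z)"
    using assms frechet_derivative_works by blast
  have "?D h = inner h (?D (1, 0), ?D (0, 1))" for h
  proof -
    have "h = fst h *\<^sub>R (1, 0) + snd h *\<^sub>R (0, 1)" by simp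
    then have "?D h = ?D (fst h *\<^sub>R (1, 0) + snd h *\<^sub>R (0, 1))" by (rule arg_cong)
    also have "\<dots> = fst h * ?D (1, 0) + snd h * ?D (0, 1)"
      unfolding linear_add[OF has_derivative_linear[OF D]] linear_scale[OF has_derivative_linear[OF D]]
      by simp
    finally show ?thesis by (simp add: inner_prod_def)
  qed
  with D show ?thesis unfolding gderiv_def by (metis (no_types, lifting) has_derivative_eq_rhs ext)
qed

lemma poisson_eq_wedge: "GDERIV f z :> df \<Longrightarrow> GDERIV g z :> dg \<Longrightarrow> poisson f g z = wedge df dg"
  unfolding gderiv_def poisson_def wedge_def
  by (simp add: frechet_derivative_at[symmetric] inner_prod_def)

section \<open>The curves X_E and the chord-tangent law\<close>

definition fE_deriv :: "real \<Rightarrow> real \<Rightarrow> real \<Rightarrow> real \<Rightarrow> real" where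
  "fE_deriv A B E x = 3 * x\<^sup>2 - 2 * E * x - (1 + 2 * A * B)"

lemma ec_double_eq:
  "ec_double A B E P = (let m = fE_deriv A B E (fst P) / (2 * snd P); x3 = - 2 * fst P + E + m\<^sup>2
                        in (x3, - snd P - m * (x3 - fst P)))"
proof -
  have "3 * (fst P)\<^sup>2 - 2 * E * fst P - 1 - 2 * A * B = fE_deriv A B E (fst P)"
    by (simp add: fE_deriv_def)
  then show ?thesis by (simp only: ec_double_def)
qed

lemma GDERIV_fE:
  assumes "GDERIV E z :> dE" and "GDERIV x z :> dx"
  shows "GDERIV (\<lambda>w. fE A B (E w) (x w)) z :> fE_deriv A B (E z) (x z) *\<^sub>R dx + (1 - (x z)\<^sup>2) *\<^sub>R dE"
  using assms unfolding fE_def fE_deriv_def gderiv_def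
  by (auto intro!: derivative_eq_intros simp: inner_add_right inner_diff_right power2_eq_square algebra_simps)

lemma GDERIV_fE_deriv:
  assumes "GDERIV E z :> dE" and "GDERIV x z :> dx"
  shows "GDERIV (\<lambda>w. fE_deriv A B (E w) (x w)) z :> (6 * x z - 2 * E z) *\<^sub>R dx - (2 * x z) *\<^sub>R dE"
  using assms unfolding fE_deriv_def gderiv_def
  by (auto intro!: derivative_eq_intros simp: inner_diff_right power2_eq_square algebra_simps)

lemma on_curve_gradient:
  assumes "open U" "z \<in> U" "\<forall>w\<in>U. on_curve A B (E w) (P w)"
    and "GDERIV E z :> dE" "GDERIV (\<lambda>w. fst (P w)) z :> dx" "GDERIV (\<lambda>w. snd (P w)) z :> dy"
  shows "(2 * snd (P z)) *\<^sub>R dy = fE_deriv A B (E z) (fst (P z)) *\<^sub>R dx + (1 - (fst (P z))\<^sup>2) *\<^sub>R dE"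
proof (rule GDERIV_unique)
  show "GDERIV (\<lambda>w. fE A B (E w) (fst (P w))) z :> (2 * snd (P z)) *\<^sub>R dy"
    by (rule GDERIV_transform_open[OF GDERIV_power2[OF assms(6)] assms(1,2)])
      (use assms(3) in \<open>simp add: on_curve_def\<close>)
  show "GDERIV (\<lambda>w. fE A B (E w) (fst (P w))) z
          :> fE_deriv A B (E z) (fst (P z)) *\<^sub>R dx + (1 - (fst (P z))\<^sup>2) *\<^sub>R dE"
    using GDERIV_fE[OF assms(4,5)] .
qed

lemma to_uv_on_curve:
  assumes "fst z \<in> {0<..<pi}"
  shows "on_curve A B (Hred A B z) (to_uv z)"
proof -
  have "sin (fst z) \<noteq> 0" using assms sin_gt_zero by fastforce
  have "(s * p)\<^sup>2 = fE A B (p\<^sup>2 + (A\<^sup>2 + 2*A*B*c + B\<^sup>2) / s\<^sup>2 + c) c"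
    if "s \<noteq> 0" "s\<^sup>2 = 1 - c\<^sup>2" for c s p :: real
    using that unfolding fE_def by (simp add: field_simps) algebra
  from this[OF \<open>sin (fst z) \<noteq> 0\<close>] show ?thesis
    unfolding on_curve_def to_uv_def Hred_def by (simp add: sin_squared_eq)
qed

lemma Hred_from_uv:
  assumes "on_curve A B E P" and "\<bar>fst P\<bar> < 1"
  shows "Hred A B (from_uv P) = E"
proof -
  obtain t s where P: "P = (t, s)" by fastforce
  have pos: "1 - t\<^sup>2 > 0" using assms(2) P by (simp add: abs_square_less_1)
  have "sin (arccos t) = sqrt (1 - t\<^sup>2)" and "cos (arccos t) = t"
    using assms(2) P by (simp_all add: sin_arccos_abs)
  then have "Hred A B (from_uv P) = (s\<^sup>2 + (A\<^sup>2 + 2*A*B*t + B\<^sup>2)) / (1 - t\<^sup>2) + t"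
    unfolding Hred_def from_uv_def P using pos by (simp add: power_divide add_divide_distrib)
  also have "s\<^sup>2 + (A\<^sup>2 + 2*A*B*t + B\<^sup>2) = (E - t) * (1 - t\<^sup>2)"
    using assms(1) P unfolding on_curve_def fE_def by (simp add: algebra_simps power2_eq_square power3_eq_cube)
  finally show ?thesis using pos by simp
qed

lemma chord_third_point:
  assumes "v\<^sup>2 = fE A B E u" and "(v + m * (x - u))\<^sup>2 = fE A B E x" and "u \<noteq> x"
  defines "t \<equiv> - u - x + E + m\<^sup>2"
  shows "(v + m * (t - u))\<^sup>2 = fE A B E t"
proof -
  have "(x - u) * (fE A B E t - (v + m * (t - u))\<^sup>2)
      = (x - t) * (fE A B E u - v\<^sup>2) + (t - u) * (fE A B E x - (v + m * (x - u))\<^sup>2)"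
    unfolding fE_def t_def by algebra
  with assms(1-3) show ?thesis by simp
qed

lemma chord_slope:
  assumes "v\<^sup>2 = fE A B E u" and "(v + m * (x - u))\<^sup>2 = fE A B E x" and "u \<noteq> x"
  shows "fE_deriv A B E u - 2 * m * v = (u - x) * (u - (- u - x + E + m\<^sup>2))"
proof -
  have "(u - x) * (fE_deriv A B E u - 2 * m * v - (u - x) * (u - (- u - x + E + m\<^sup>2)))
        = (fE A B E u - v\<^sup>2) - (fE A B E x - (v + m * (x - u))\<^sup>2)"
    unfolding fE_def fE_deriv_def by algebra
  with assms show ?thesis by simp
qed

lemma tangent_third_point:
  assumes "v\<^sup>2 = fE A B E u" and "m * (2 * v) = fE_deriv A B E u"
  defines "t \<equiv> - 2 * u + E + m\<^sup>2"
  shows "(v + m * (t - u))\<^sup>2 = fE A B E t"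
proof -
  have "fE A B E t - (v + m * (t - u))\<^sup>2
      = (fE A B E u - v\<^sup>2) + (t - u) * (fE_deriv A B E u - m * (2 * v))"
    unfolding fE_def fE_deriv_def t_def by algebra
  with assms(1,2) show ?thesis by simp
qed

lemma ec_add_on_curve:
  assumes "on_curve A B E P" and "on_curve A B E Q" and "fst P \<noteq> fst Q"
  shows "on_curve A B E (ec_add E P Q)"
proof -
  define m where "m = (snd P - snd Q) / (fst P - fst Q)"
  have "snd Q = snd P + m * (fst Q - fst P)"
    using assms(3) unfolding m_def by (simp add: field_simps)
  with assms chord_third_point[of "snd P" A B E "fst P" m "fst Q"] show ?thesis
    unfolding on_curve_def ec_add_def Let_def m_def[symmetric]
    by (simp add: power2_eq_square algebra_simps)
qed

lemma ec_double_on_curve: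
  assumes "on_curve A B E P" and "snd P \<noteq> 0"
  shows "on_curve A B E (ec_double A B E P)"
proof -
  define m where "m = fE_deriv A B E (fst P) / (2 * snd P)"
  have "m * (2 * snd P) = fE_deriv A B E (fst P)"
    using assms(2) unfolding m_def by simp
  with assms tangent_third_point[of "snd P" A B E "fst P" m] show ?thesis
    unfolding on_curve_def ec_double_eq Let_def m_def[symmetric]
    by (simp add: power2_eq_square algebra_simps)
qed

lemma GDERIV_ec_add:
  assumes "GDERIV E z :> dE"
    and "GDERIV (\<lambda>w. fst (P w)) z :> dx1" and "GDERIV (\<lambda>w. snd (P w)) z :> dy1"
    and "GDERIV (\<lambda>w. fst (Q w)) z :> dx2" and "GDERIV (\<lambda>w. snd (Q w)) z :> dy2"
    and "fst (P z) \<noteq> fst (Q z)"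
  defines "m \<equiv> (snd (P z) - snd (Q z)) / (fst (P z) - fst (Q z))"
  obtains dm dt where "(fst (P z) - fst (Q z)) *\<^sub>R dm = dy1 - dy2 - m *\<^sub>R (dx1 - dx2)"
    and "dt = - dx1 - dx2 + dE + (2 * m) *\<^sub>R dm"
    and "GDERIV (\<lambda>w. fst (ec_add (E w) (P w) (Q w))) z :> dt"
    and "GDERIV (\<lambda>w. snd (ec_add (E w) (P w) (Q w))) z
           :> - dy1 - (m *\<^sub>R (dt - dx1) + (fst (ec_add (E z) (P z) (Q z)) - fst (P z)) *\<^sub>R dm)"
proof -
  let ?m = "\<lambda>w. (snd (P w) - snd (Q w)) / (fst (P w) - fst (Q w))"
  obtain dm where dm: "GDERIV ?m z :> dm"
    and rel: "(fst (P z) - fst (Q z)) *\<^sub>R dm = dy1 - dy2 - m *\<^sub>R (dx1 - dx2)"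
    using GDERIV_divide[OF GDERIV_diff[OF assms(3,5)] GDERIV_diff[OF assms(2,4)]] assms(6)
    unfolding m_def by auto
  define dt where "dt = - dx1 - dx2 + dE + (2 * m) *\<^sub>R dm"
  have dt: "GDERIV (\<lambda>w. fst (ec_add (E w) (P w) (Q w))) z :> dt"
    using GDERIV_add[OF GDERIV_add[OF GDERIV_diff[OF GDERIV_minus[OF assms(2)] assms(4)] assms(1)]
        GDERIV_power2[OF dm]]
    unfolding dt_def m_def ec_add_def Let_def by simp
  have "GDERIV (\<lambda>w. snd (ec_add (E w) (P w) (Q w))) z
          :> - dy1 - (m *\<^sub>R (dt - dx1) + (fst (ec_add (E z) (P z) (Q z)) - fst (P z)) *\<^sub>R dm)"
    using GDERIV_diff[OF GDERIV_minus[OF assms(3)] GDERIV_mult[OF dm GDERIV_diff[OF dt assms(2)]]]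
    unfolding m_def ec_add_def Let_def by simp
  with that rel dt_def dt show ?thesis by blast
qed

lemma GDERIV_ec_double:
  fixes A B :: real
  assumes "GDERIV E z :> dE"
    and "GDERIV (\<lambda>w. fst (P w)) z :> dx" and "GDERIV (\<lambda>w. snd (P w)) z :> dy"
    and "snd (P z) \<noteq> 0"
  defines "m \<equiv> fE_deriv A B (E z) (fst (P z)) / (2 * snd (P z))"
  obtains dm dt
  where "(2 * snd (P z)) *\<^sub>R dm = (6 * fst (P z) - 2 * E z) *\<^sub>R dx - (2 * fst (P z)) *\<^sub>R dE - (2 * m) *\<^sub>R dy"
    and "dt = dE - 2 *\<^sub>R dx + (2 * m) *\<^sub>R dm"
    and "GDERIV (\<lambda>w. fst (ec_double A B (E w) (P w))) z :> dt"
    and "GDERIV (\<lambda>w. snd (ec_double A B (E w) (P w))) z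
           :> - dy - (m *\<^sub>R (dt - dx) + (fst (ec_double A B (E z) (P z)) - fst (P z)) *\<^sub>R dm)"
proof -
  let ?m = "\<lambda>w. fE_deriv A B (E w) (fst (P w)) / (2 * snd (P w))"
  have d2y: "GDERIV (\<lambda>w. 2 * snd (P w)) z :> 2 *\<^sub>R dy"
    using GDERIV_mult[OF GDERIV_const assms(3), of 2] by simp
  have ne: "2 * snd (P z) \<noteq> 0" using assms(4) by simp
  obtain dm where dm: "GDERIV ?m z :> dm"
    and "(2 * snd (P z)) *\<^sub>R dm = ((6 * fst (P z) - 2 * E z) *\<^sub>R dx - (2 * fst (P z)) *\<^sub>R dE) - m *\<^sub>R (2 *\<^sub>R dy)"
    by (rule GDERIV_divide[OF GDERIV_fE_deriv[where A=A and B=B, OF assms(1,2)] d2y ne, folded m_def])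
  then have rel: "(2 * snd (P z)) *\<^sub>R dm
      = (6 * fst (P z) - 2 * E z) *\<^sub>R dx - (2 * fst (P z)) *\<^sub>R dE - (2 * m) *\<^sub>R dy"
    by simp
  define dt where "dt = dE - 2 *\<^sub>R dx + (2 * m) *\<^sub>R dm"
  have dt: "GDERIV (\<lambda>w. fst (ec_double A B (E w) (P w))) z :> dt"
    using GDERIV_add[OF GDERIV_diff[OF assms(1) GDERIV_mult[OF GDERIV_const[of 2] assms(2)]] GDERIV_power2[OF dm]]
    unfolding dt_def m_def ec_double_eq Let_def by (simp add: algebra_simps)
  have "GDERIV (\<lambda>w. snd (ec_double A B (E w) (P w))) z
          :> - dy - (m *\<^sub>R (dt - dx) + (fst (ec_double A B (E z) (P z)) - fst (P z)) *\<^sub>R dm)"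
    using GDERIV_diff[OF GDERIV_minus[OF assms(3)] GDERIV_mult[OF dm GDERIV_diff[OF dt assms(2)]]]
    unfolding m_def ec_double_eq Let_def by simp
  with that rel dt_def dt show ?thesis by blast
qed

section \<open>Points carried by the Hamiltonian flow\<close>

(* In bracket notation {x, E} = -2 c y and {y, E} = -c f_E'(x): the flow of E moves P = (x, y) along
   -c times the invariant vector field 2y d/dx + f_E'(x) d/dy of X_E. *)
definition moves_at_rate :: "real \<Rightarrow> real \<Rightarrow> (real \<times> real \<Rightarrow> real) \<Rightarrow> real \<times> real \<Rightarrow> real \<Rightarrow>
    (real \<times> real \<Rightarrow> real \<times> real) \<Rightarrow> real \<times> real \<Rightarrow> bool" where
  "moves_at_rate A B E dE c P z \<longleftrightarrow> GDERIV E z :> dE \<and>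
     (\<exists>dx dy. GDERIV (\<lambda>w. fst (P w)) z :> dx \<and> GDERIV (\<lambda>w. snd (P w)) z :> dy \<and>
        wedge dx dE = - 2 * c * snd (P z) \<and> wedge dy dE = - c * fE_deriv A B (E z) (fst (P z)))"

(* {x, y} = -c (1 - x^2).  The point (u, v) has this with c = 1, and passing back to
   (arccos x, y / sin (arccos x)) turns it into valence c (poisson_from_uv). *)
definition uv_valence :: "real \<Rightarrow> (real \<times> real \<Rightarrow> real \<times> real) \<Rightarrow> real \<times> real \<Rightarrow> bool" where
  "uv_valence c P z \<longleftrightarrow>
     (\<exists>dx dy. GDERIV (\<lambda>w. fst (P w)) z :> dx \<and> GDERIV (\<lambda>w. snd (P w)) z :> dy \<and>
        wedge dx dy = - c * (1 - (fst (P z))\<^sup>2))"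

lemma moves_at_rate_gradient_nonzero:
  assumes "moves_at_rate A B E dE c P z" and "c \<noteq> 0" and "snd (P z) \<noteq> 0"
  shows "dE \<noteq> 0"
  using assms unfolding moves_at_rate_def by (auto simp: wedge_bilinear)

lemma GDERIV_to_uv:
  shows "GDERIV (\<lambda>w. fst (to_uv w)) z :> (- sin (fst z), 0)"
    and "GDERIV (\<lambda>w. snd (to_uv w)) z :> (cos (fst z) * snd z, sin (fst z))"
  using GDERIV_DERIV_compose[OF GDERIV_fst DERIV_cos, of z]
    GDERIV_mult[OF GDERIV_DERIV_compose[OF GDERIV_fst DERIV_sin] GDERIV_snd, of z]
  by (simp_all add: to_uv_def ac_simps)

lemma to_uv_uv_valence: "uv_valence 1 to_uv z"
proof -
  have "wedge (- sin (fst z), 0) (cos (fst z) * snd z, sin (fst z)) = - 1 * (1 - (fst (to_uv z))\<^sup>2)"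
    by (simp add: wedge_def to_uv_def cos_squared_eq flip: power2_eq_square)
  with GDERIV_to_uv show ?thesis
    unfolding uv_valence_def by blast
qed

lemma to_uv_moves_at_rate:
  assumes "fst z \<in> {0<..<pi}"
  shows "\<exists>dE. moves_at_rate A B (Hred A B) dE 1 to_uv z"
proof -
  have sin: "sin (fst z) \<noteq> 0" using assms sin_gt_zero by fastforce
  define N where "N \<theta> = A\<^sup>2 + 2 * A * B * cos \<theta> + B\<^sup>2" for \<theta>
  define e where "e = - 2 * A * B * sin (fst z) / (sin (fst z))\<^sup>2
                      - 2 * N (fst z) * cos (fst z) / (sin (fst z))^3 - sin (fst z)"
  have "((\<lambda>\<theta>. N \<theta> / (sin \<theta>)\<^sup>2 + cos \<theta>) has_real_derivative e) (at (fst z))"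
    unfolding N_def e_def using sin
    by (auto intro!: derivative_eq_intros simp: field_simps power2_eq_square power3_eq_cube)
  from GDERIV_add[OF GDERIV_DERIV_compose[OF GDERIV_fst this] GDERIV_power2[OF GDERIV_snd]]
  have dE: "GDERIV (Hred A B) z :> (e, 2 * snd z)"
    unfolding Hred_def N_def by (simp add: add.commute add.left_commute)
  have "c * p * (2 * p) - s * (- 2 * A * B * s / s\<^sup>2 - 2 * (A\<^sup>2 + 2 * A * B * c + B\<^sup>2) * c / s^3 - s)
        = - fE_deriv A B (p\<^sup>2 + (A\<^sup>2 + 2 * A * B * c + B\<^sup>2) / s\<^sup>2 + c) c"
    if "s \<noteq> 0" "s\<^sup>2 = 1 - c\<^sup>2" for c s p :: real
    using that unfolding fE_deriv_def by (simp add: field_simps) algebra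
  from this[OF sin sin_squared_eq, of "snd z"]
  have "cos (fst z) * snd z * (2 * snd z) - sin (fst z) * e = - fE_deriv A B (Hred A B z) (cos (fst z))"
    unfolding e_def N_def Hred_def .
  then have "wedge (- sin (fst z), 0) (e, 2 * snd z) = - 2 * 1 * snd (to_uv z)"
    and "wedge (cos (fst z) * snd z, sin (fst z)) (e, 2 * snd z)
           = - 1 * fE_deriv A B (Hred A B z) (fst (to_uv z))"
    by (simp_all add: wedge_def to_uv_def)
  with dE GDERIV_to_uv show ?thesis
    unfolding moves_at_rate_def by blast
qed

lemma ec_add_moves_at_rate:
  assumes P: "moves_at_rate A B E dE a P z" and Q: "moves_at_rate A B E dE b Q z"
    and "on_curve A B (E z) (P z)" and "on_curve A B (E z) (Q z)" and "fst (P z) \<noteq> fst (Q z)"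
  shows "moves_at_rate A B E dE (a + b) (\<lambda>w. ec_add (E w) (P w) (Q w)) z"
proof -
  obtain x1 y1 x2 y2 where Pz: "P z = (x1, y1)" and Qz: "Q z = (x2, y2)" by fastforce
  obtain dx1 dy1 where dx1: "GDERIV (\<lambda>w. fst (P w)) z :> dx1" and dy1: "GDERIV (\<lambda>w. snd (P w)) z :> dy1"
    and P1: "wedge dx1 dE = - 2 * a * y1" and P2: "wedge dy1 dE = - a * fE_deriv A B (E z) x1"
    using P unfolding moves_at_rate_def Pz fst_conv snd_conv by blast
  obtain dx2 dy2 where dx2: "GDERIV (\<lambda>w. fst (Q w)) z :> dx2" and dy2: "GDERIV (\<lambda>w. snd (Q w)) z :> dy2"
    and Q1: "wedge dx2 dE = - 2 * b * y2" and Q2: "wedge dy2 dE = - b * fE_deriv A B (E z) x2"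
    using Q unfolding moves_at_rate_def Qz fst_conv snd_conv by blast
  have dE: "GDERIV E z :> dE" using P unfolding moves_at_rate_def by blast
  define m where "m = (y1 - y2) / (x1 - x2)"
  define t where "t = - x1 - x2 + E z + m\<^sup>2"
  have ne: "x1 \<noteq> x2" using assms(5) Pz Qz by simp
  have Rz: "ec_add (E z) (P z) (Q z) = (t, - y1 - m * (t - x1))"
    unfolding Pz Qz ec_add_def Let_def m_def t_def by simp
  obtain dm dt where dm: "(x1 - x2) *\<^sub>R dm = dy1 - dy2 - m *\<^sub>R (dx1 - dx2)"
    and dt: "dt = - dx1 - dx2 + dE + (2 * m) *\<^sub>R dm"
    and t: "GDERIV (\<lambda>w. fst (ec_add (E w) (P w) (Q w))) z :> dt"
    and s: "GDERIV (\<lambda>w. snd (ec_add (E w) (P w) (Q w))) z :> - dy1 - (m *\<^sub>R (dt - dx1) + (t - x1) *\<^sub>R dm)"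
    by (rule GDERIV_ec_add[OF dE dx1 dy1 dx2 dy2 assms(5), unfolded Rz,
          unfolded Pz Qz fst_conv snd_conv m_def[symmetric]])
  have y2: "y2 = y1 + m * (x2 - x1)" using ne unfolding m_def by (simp add: field_simps)
  have cP: "y1\<^sup>2 = fE A B (E z) x1" and cQ: "(y1 + m * (x2 - x1))\<^sup>2 = fE A B (E z) x2"
    using assms(3,4) y2 unfolding on_curve_def Pz Qz by simp_all
  have L1: "fE_deriv A B (E z) x1 - 2 * m * y1 = (x1 - x2) * (x1 - t)"
    using chord_slope[OF cP cQ ne] unfolding t_def by simp
  have L2: "fE_deriv A B (E z) x2 - 2 * m * y2 = (x2 - x1) * (x2 - t)"
    using L1 y2 unfolding t_def fE_deriv_def by algebra
  have L3: "fE_deriv A B (E z) t - 2 * m * (y1 + m * (t - x1)) = (t - x1) * (t - x2)"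
    using L1 unfolding t_def fE_deriv_def by algebra
  have "(x1 - x2) * wedge dm dE = wedge dy1 dE - wedge dy2 dE - m * (wedge dx1 dE - wedge dx2 dE)"
    using arg_cong[OF dm, of "\<lambda>g. wedge g dE"] by (simp add: wedge_bilinear)
  also have "\<dots> = (x1 - x2) * (a * (t - x1) + b * (t - x2))"
    using P1 P2 Q1 Q2 L1 L2 by algebra
  finally have Wm: "wedge dm dE = a * (t - x1) + b * (t - x2)" using ne by simp
  have Wt: "wedge dt dE = - 2 * (a + b) * (- y1 - m * (t - x1))"
    unfolding dt wedge_bilinear using Wm P1 Q1 y2 by algebra
  have "wedge (- dy1 - (m *\<^sub>R (dt - dx1) + (t - x1) *\<^sub>R dm)) dE = - (a + b) * fE_deriv A B (E z) t"
    unfolding wedge_bilinear using Wm Wt P1 P2 L1 L3 by algebra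
  with dE t s Wt show ?thesis
    unfolding moves_at_rate_def Rz fst_conv snd_conv by blast
qed

lemma ec_double_moves_at_rate:
  assumes P: "moves_at_rate A B E dE a P z" and "on_curve A B (E z) (P z)" and "snd (P z) \<noteq> 0"
  shows "moves_at_rate A B E dE (2 * a) (\<lambda>w. ec_double A B (E w) (P w)) z"
proof -
  obtain x y where Pz: "P z = (x, y)" by fastforce
  obtain dx dy where dx: "GDERIV (\<lambda>w. fst (P w)) z :> dx" and dy: "GDERIV (\<lambda>w. snd (P w)) z :> dy"
    and P1: "wedge dx dE = - 2 * a * y" and P2: "wedge dy dE = - a * fE_deriv A B (E z) x"
    using P unfolding moves_at_rate_def Pz fst_conv snd_conv by blast
  have dE: "GDERIV E z :> dE" using P unfolding moves_at_rate_def by blast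
  define m where "m = fE_deriv A B (E z) x / (2 * y)"
  define t where "t = - 2 * x + E z + m\<^sup>2"
  have y: "y \<noteq> 0" using assms(3) Pz by simp
  have slope: "m * (2 * y) = fE_deriv A B (E z) x" using y unfolding m_def by simp
  have Rz: "ec_double A B (E z) (P z) = (t, - y - m * (t - x))"
    unfolding Pz ec_double_eq Let_def m_def t_def by simp
  obtain dm dt where dm: "(2 * y) *\<^sub>R dm = (6 * x - 2 * E z) *\<^sub>R dx - (2 * x) *\<^sub>R dE - (2 * m) *\<^sub>R dy"
    and dt: "dt = dE - 2 *\<^sub>R dx + (2 * m) *\<^sub>R dm"
    and t: "GDERIV (\<lambda>w. fst (ec_double A B (E w) (P w))) z :> dt"
    and s: "GDERIV (\<lambda>w. snd (ec_double A B (E w) (P w))) z :> - dy - (m *\<^sub>R (dt - dx) + (t - x) *\<^sub>R dm)"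
    by (rule GDERIV_ec_double[where A=A and B=B, OF dE dx dy assms(3), unfolded Rz,
          unfolded Pz fst_conv snd_conv m_def[symmetric]])
  have "(2 * y) * wedge dm dE = (6 * x - 2 * E z) * wedge dx dE - 2 * m * wedge dy dE"
    using arg_cong[OF dm, of "\<lambda>g. wedge g dE"] by (simp add: wedge_bilinear)
  also have "\<dots> = (2 * y) * (a * (2 * m\<^sup>2 - 6 * x + 2 * E z))"
    using P1 P2 slope by algebra
  finally have Wm: "wedge dm dE = a * (2 * m\<^sup>2 - 6 * x + 2 * E z)" using y by simp
  have Wt: "wedge dt dE = - 2 * (2 * a) * (- y - m * (t - x))"
    unfolding dt wedge_bilinear using Wm P1 unfolding t_def by algebra
  have "wedge (- dy - (m *\<^sub>R (dt - dx) + (t - x) *\<^sub>R dm)) dE = - (2 * a) * fE_deriv A B (E z) t"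
    unfolding wedge_bilinear using Wm Wt P1 P2 slope unfolding t_def fE_deriv_def by algebra
  with dE t s Wt show ?thesis
    unfolding moves_at_rate_def Rz fst_conv snd_conv by blast
qed

lemma uv_valence_of_moves_at_rate:
  assumes P: "moves_at_rate A B E dE c P z" and "dE \<noteq> 0"
    and "open U" and "z \<in> U" and "\<forall>w\<in>U. on_curve A B (E w) (P w)"
  shows "uv_valence c P z"
proof -
  obtain x y where Pz: "P z = (x, y)" by fastforce
  obtain dx dy where dx: "GDERIV (\<lambda>w. fst (P w)) z :> dx" and dy: "GDERIV (\<lambda>w. snd (P w)) z :> dy"
    and P1: "wedge dx dE = - 2 * c * y" and P2: "wedge dy dE = - c * fE_deriv A B (E z) x"
    using P unfolding moves_at_rate_def Pz fst_conv snd_conv by blast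
  have dE: "GDERIV E z :> dE" using P unfolding moves_at_rate_def by blast
  have curve: "(2 * y) *\<^sub>R dy = fE_deriv A B (E z) x *\<^sub>R dx + (1 - x\<^sup>2) *\<^sub>R dE"
    using on_curve_gradient[OF assms(3-5) dE dx dy] unfolding Pz by simp
  have "wedge dx dy *\<^sub>R dE = wedge dE dy *\<^sub>R dx + wedge dx dE *\<^sub>R dy"
    by (rule wedge_scaleR_expand)
  also have "\<dots> = - c *\<^sub>R ((2 * y) *\<^sub>R dy - fE_deriv A B (E z) x *\<^sub>R dx)"
    using P1 P2 wedge_antisym[of dE dy] by (simp add: algebra_simps)
  also have "\<dots> = (- c * (1 - x\<^sup>2)) *\<^sub>R dE"
    unfolding curve by simp
  finally have "wedge dx dy = - c * (1 - x\<^sup>2)"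
    using assms(2) scaleR_cancel_right by blast
  with dx dy show ?thesis
    unfolding uv_valence_def Pz fst_conv by blast
qed

(* Here dE may vanish (at a singular point of X_E), so the bracket is computed directly instead of
   through uv_valence_of_moves_at_rate. *)
lemma uv_valence_ec_add_fixed_abscissa:
  assumes P: "moves_at_rate A B E dE c P z" and V: "uv_valence c P z" and "on_curve A B (E z) (P z)"
    and dmu: "GDERIV mu z :> k *\<^sub>R dE" and k: "k * (2 * mu z) = 1 - lam\<^sup>2"
    and "(mu z)\<^sup>2 = fE A B (E z) lam" and "fst (P z) \<noteq> lam"
  shows "uv_valence c (\<lambda>w. ec_add (E w) (P w) (lam, mu w)) z"
proof -
  obtain x y where Pz: "P z = (x, y)" by fastforce
  obtain dx dy where dx: "GDERIV (\<lambda>w. fst (P w)) z :> dx" and dy: "GDERIV (\<lambda>w. snd (P w)) z :> dy"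
    and P1: "wedge dx dE = - 2 * c * y" and P2: "wedge dy dE = - c * fE_deriv A B (E z) x"
    using P unfolding moves_at_rate_def Pz fst_conv snd_conv by blast
  have V1: "wedge dx dy = - c * (1 - x\<^sup>2)"
    using V GDERIV_unique[OF dx] GDERIV_unique[OF dy] unfolding uv_valence_def Pz fst_conv by blast
  have dE: "GDERIV E z :> dE" using P unfolding moves_at_rate_def by blast
  define m where "m = (y - mu z) / (x - lam)"
  define t where "t = - x - lam + E z + m\<^sup>2"
  have ne: "x \<noteq> lam" using assms(7) Pz by simp
  have mu: "mu z = y + m * (lam - x)" using ne unfolding m_def by (simp add: field_simps)
  have Rz: "ec_add (E z) (P z) (lam, mu z) = (t, - y - m * (t - x))"
    unfolding Pz ec_add_def Let_def m_def t_def by simp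
  have cP: "y\<^sup>2 = fE A B (E z) x" and cQ: "(y + m * (lam - x))\<^sup>2 = fE A B (E z) lam"
    using assms(3,6) mu unfolding on_curve_def Pz by simp_all
  have L1: "fE_deriv A B (E z) x - 2 * m * y = (x - lam) * (x - t)"
    using chord_slope[OF cP cQ ne] unfolding t_def by simp
  have dlam: "GDERIV (\<lambda>w. fst (lam, mu w)) z :> 0" and dmu': "GDERIV (\<lambda>w. snd (lam, mu w)) z :> k *\<^sub>R dE"
    using GDERIV_const dmu by simp_all
  obtain dm dt where dm: "(x - lam) *\<^sub>R dm = dy - k *\<^sub>R dE - m *\<^sub>R (dx - 0)"
    and dt: "dt = - dx - 0 + dE + (2 * m) *\<^sub>R dm"
    and t: "GDERIV (\<lambda>w. fst (ec_add (E w) (P w) (lam, mu w))) z :> dt"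
    and s: "GDERIV (\<lambda>w. snd (ec_add (E w) (P w) (lam, mu w))) z :> - dy - (m *\<^sub>R (dt - dx) + (t - x) *\<^sub>R dm)"
    by (rule GDERIV_ec_add[where Q = "\<lambda>w. (lam, mu w)", OF dE dx dy dlam dmu', unfolded Rz,
          unfolded Pz fst_conv snd_conv m_def[symmetric], OF ne])
  have Wx: "(x - lam) * wedge dm dx = c * (1 - x\<^sup>2) - 2 * k * c * y"
    using arg_cong[OF dm, of "\<lambda>g. wedge g dx"] P1 V1 wedge_antisym[of dy dx] wedge_antisym[of dE dx]
    by (simp add: wedge_bilinear)
  have Wy: "(x - lam) * wedge dm dy = - k * c * fE_deriv A B (E z) x + m * c * (1 - x\<^sup>2)"
    using arg_cong[OF dm, of "\<lambda>g. wedge g dy"] P2 V1 wedge_antisym[of dE dy]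
    by (simp add: wedge_bilinear)
  have "(x - lam) * wedge dm dE = wedge dy dE - m * wedge dx dE"
    using arg_cong[OF dm, of "\<lambda>g. wedge g dE"] by (simp add: wedge_bilinear)
  also have "\<dots> = (x - lam) * (c * (t - x))"
    using P1 P2 L1 by algebra
  finally have WE: "wedge dm dE = c * (t - x)" using ne by simp
  have "(x - lam) * wedge dt (- dy - (m *\<^sub>R (dt - dx) + (t - x) *\<^sub>R dm))
      = (x - lam) * (- c * (1 - t\<^sup>2))"
    unfolding dt wedge_bilinear
    using Wx Wy WE P1 P2 V1 L1 k cP cQ mu
      wedge_antisym[of dx dy] wedge_antisym[of dx dE] wedge_antisym[of dy dE]
      wedge_antisym[of dm dx] wedge_antisym[of dm dy] wedge_antisym[of dm dE]
    unfolding t_def fE_deriv_def fE_def by algebra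
  with ne have "wedge dt (- dy - (m *\<^sub>R (dt - dx) + (t - x) *\<^sub>R dm)) = - c * (1 - t\<^sup>2)"
    by (metis mult_cancel_left right_minus_eq)
  with t s show ?thesis
    unfolding uv_valence_def Rz fst_conv by blast
qed

lemma poisson_from_uv:
  assumes "uv_valence c G z" and "\<bar>fst (G z)\<bar> < 1"
  shows "(\<lambda>w. from_uv (G w)) differentiable (at z)"
    and "poisson (\<lambda>w. fst (from_uv (G w))) (\<lambda>w. snd (from_uv (G w))) z = c"
proof -
  obtain dt ds where dt: "GDERIV (\<lambda>w. fst (G w)) z :> dt" and ds: "GDERIV (\<lambda>w. snd (G w)) z :> ds"
    and V: "wedge dt ds = - c * (1 - (fst (G z))\<^sup>2)"
    using assms(1) unfolding uv_valence_def by blast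
  define t where "t = fst (G z)"
  have t: "- 1 < t" "t < 1" using assms(2) unfolding t_def by auto
  have pos: "1 - t\<^sup>2 > 0" using assms(2) unfolding t_def by (simp add: abs_square_less_1)
  have sin: "sin (arccos t) = sqrt (1 - t\<^sup>2)" using t by (simp add: sin_arccos_abs)
  define S where "S = sqrt (1 - t\<^sup>2)"
  have S: "S > 0" "S\<^sup>2 = 1 - t\<^sup>2" using pos unfolding S_def by simp_all
  have "GDERIV (\<lambda>w. arccos (fst (G w))) z :> inverse (- sqrt (1 - t\<^sup>2)) *\<^sub>R dt"
    using GDERIV_DERIV_compose[OF dt DERIV_arccos[OF t[unfolded t_def]]] unfolding t_def .
  then have dth: "GDERIV (\<lambda>w. fst (from_uv (G w))) z :> (- 1 / S) *\<^sub>R dt"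
    unfolding S_def by (simp add: from_uv_def divide_inverse)
  note dsin = GDERIV_DERIV_compose[OF GDERIV_DERIV_compose[OF dt DERIV_arccos[OF t[unfolded t_def]]] DERIV_sin]
  have "sin (arccos (fst (G z))) \<noteq> 0" using sin pos unfolding t_def by simp
  then obtain dp where dp: "GDERIV (\<lambda>w. snd (G w) / sin (arccos (fst (G w)))) z :> dp"
    and rel: "sin (arccos t) *\<^sub>R dp = ds - (snd (G z) / sin (arccos t)) *\<^sub>R
                 (cos (arccos t) *\<^sub>R inverse (- sqrt (1 - t\<^sup>2)) *\<^sub>R dt)"
    using GDERIV_divide[OF ds dsin] unfolding t_def by blast
  have dp': "GDERIV (\<lambda>w. snd (from_uv (G w))) z :> dp"
    using dp by (simp add: from_uv_def)
  have "S * wedge dt dp = wedge dt ds"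
    using arg_cong[OF rel, of "wedge dt"] unfolding sin S_def[symmetric] by (simp add: wedge_bilinear)
  then have "wedge ((- 1 / S) *\<^sub>R dt) dp = - wedge dt ds / S\<^sup>2"
    using S(1) by (simp add: wedge_bilinear power2_eq_square field_simps)
  also have "\<dots> = c"
    using V S pos unfolding t_def[symmetric] by simp
  finally show "poisson (\<lambda>w. fst (from_uv (G w))) (\<lambda>w. snd (from_uv (G w))) z = c"
    unfolding poisson_eq_wedge[OF dth dp'] .
  have "((\<lambda>w. (fst (from_uv (G w)), snd (from_uv (G w)))) has_derivative
        (\<lambda>h. (inner h ((- 1 / S) *\<^sub>R dt), inner h dp))) (at z)"
    using has_derivative_Pair[OF dth[unfolded gderiv_def] dp'[unfolded gderiv_def]] .
  then show "(\<lambda>w. from_uv (G w)) differentiable (at z)"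
    unfolding differentiable_def by auto
qed

section \<open>The three Baecklund maps\<close>

lemma canonical_valence_from_uv:
  assumes "\<forall>z\<in>U. on_curve A B (Hred A B z) (G z) \<and> \<bar>fst (G z)\<bar> < 1 \<and> uv_valence c G z"
  shows "canonical_valence c (\<lambda>z. from_uv (G z)) U \<and> (\<forall>z\<in>U. Hred A B (from_uv (G z)) = Hred A B z)"
  using assms poisson_from_uv Hred_from_uv unfolding canonical_valence_def by blast

lemma addition_map_canonical:
  fixes mu :: "real \<times> real \<Rightarrow> real"
  assumes "open U" and "U \<subseteq> {0<..<pi} \<times> UNIV"
    and "\<forall>z\<in>U. (mu z)\<^sup>2 = fE A B (Hred A B z) lam \<and> mu z \<noteq> 0 \<and> mu differentiable (at z)
               \<and> fst (to_uv z) \<noteq> lam \<and> \<bar>fst (ec_add (Hred A B z) (to_uv z) (lam, mu z))\<bar> < 1"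
  defines "G \<equiv> \<lambda>z. ec_add (Hred A B z) (to_uv z) (lam, mu z)"
  shows "canonical_valence 1 (\<lambda>z. from_uv (G z)) U \<and> (\<forall>z\<in>U. Hred A B (from_uv (G z)) = Hred A B z)"
proof (rule canonical_valence_from_uv, intro ballI conjI)
  fix z assume z: "z \<in> U"
  then have th: "fst z \<in> {0<..<pi}" using assms(2) by auto
  have base: "on_curve A B (Hred A B z) (to_uv z)" using to_uv_on_curve[OF th] .
  show "on_curve A B (Hred A B z) (G z)"
    using ec_add_on_curve[OF base] assms(3) z unfolding G_def on_curve_def by auto
  show "\<bar>fst (G z)\<bar> < 1" using assms(3) z unfolding G_def by blast
  obtain dE where rate: "moves_at_rate A B (Hred A B) dE 1 to_uv z"
    using to_uv_moves_at_rate[OF th] by blast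
  obtain dmu where dmu: "GDERIV mu z :> dmu"
    using differentiable_imp_GDERIV assms(3) z by blast
  have "(2 * snd (lam, mu z)) *\<^sub>R dmu
      = fE_deriv A B (Hred A B z) (fst (lam, mu z)) *\<^sub>R 0 + (1 - (fst (lam, mu z))\<^sup>2) *\<^sub>R dE"
    by (rule on_curve_gradient[OF assms(1) z])
      (use assms(3) rate dmu in \<open>auto simp: on_curve_def moves_at_rate_def intro: GDERIV_const\<close>)
  then have dmu_dE: "(2 * mu z) *\<^sub>R dmu = (1 - lam\<^sup>2) *\<^sub>R dE" by simp
  have mu: "mu z \<noteq> 0" using assms(3) z by blast
  then have "dmu = (1 / (2 * mu z)) *\<^sub>R ((2 * mu z) *\<^sub>R dmu)" by simp
  also have "\<dots> = ((1 - lam\<^sup>2) / (2 * mu z)) *\<^sub>R dE" unfolding dmu_dE by simp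
  finally have "GDERIV mu z :> ((1 - lam\<^sup>2) / (2 * mu z)) *\<^sub>R dE" using dmu by simp
  then show "uv_valence 1 G z"
    unfolding G_def
    by (intro uv_valence_ec_add_fixed_abscissa[OF rate to_uv_uv_valence base])
      (use assms(3) z mu in auto)
qed

lemma doubling_map_canonical:
  assumes "open U" and "U \<subseteq> {0<..<pi} \<times> UNIV"
    and "\<forall>z\<in>U. snd (to_uv z) \<noteq> 0 \<and> \<bar>fst (ec_double A B (Hred A B z) (to_uv z))\<bar> < 1"
  defines "G \<equiv> \<lambda>z. ec_double A B (Hred A B z) (to_uv z)"
  shows "canonical_valence 2 (\<lambda>z. from_uv (G z)) U \<and> (\<forall>z\<in>U. Hred A B (from_uv (G z)) = Hred A B z)"
proof -
  have curve: "\<forall>z\<in>U. on_curve A B (Hred A B z) (G z)"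
    using assms(2,3) unfolding G_def by (auto intro!: ec_double_on_curve to_uv_on_curve)
  have "uv_valence 2 G z" if z: "z \<in> U" for z
  proof -
    have th: "fst z \<in> {0<..<pi}" using assms(2) z by auto
    obtain dE where rate: "moves_at_rate A B (Hred A B) dE 1 to_uv z"
      using to_uv_moves_at_rate[OF th] by blast
    have v: "snd (to_uv z) \<noteq> 0" using assms(3) z by blast
    have "moves_at_rate A B (Hred A B) dE (2 * 1) G z"
      unfolding G_def by (rule ec_double_moves_at_rate[OF rate to_uv_on_curve[OF th] v])
    from uv_valence_of_moves_at_rate[OF this moves_at_rate_gradient_nonzero[OF rate _ v] assms(1) z curve]
    show ?thesis by simp
  qed
  with curve assms(3) show ?thesis
    unfolding G_def by (intro canonical_valence_from_uv) blast
qed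

lemma tripling_map_canonical:
  assumes "open U" and "U \<subseteq> {0<..<pi} \<times> UNIV"
    and "\<forall>z\<in>U. snd (to_uv z) \<noteq> 0 \<and> fst (ec_double A B (Hred A B z) (to_uv z)) \<noteq> fst (to_uv z)
               \<and> \<bar>fst (ec_triple A B (Hred A B z) (to_uv z))\<bar> < 1"
  defines "G \<equiv> \<lambda>z. ec_triple A B (Hred A B z) (to_uv z)"
  shows "canonical_valence 3 (\<lambda>z. from_uv (G z)) U \<and> (\<forall>z\<in>U. Hred A B (from_uv (G z)) = Hred A B z)"
proof -
  have curve2: "on_curve A B (Hred A B z) (ec_double A B (Hred A B z) (to_uv z))" if "z \<in> U" for z
  proof (rule ec_double_on_curve[OF to_uv_on_curve])
    show "fst z \<in> {0<..<pi}" and "snd (to_uv z) \<noteq> 0" using assms(2,3) that by auto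
  qed
  have curve: "\<forall>z\<in>U. on_curve A B (Hred A B z) (G z)"
  proof
    fix z assume z: "z \<in> U"
    show "on_curve A B (Hred A B z) (G z)"
      unfolding G_def ec_triple_def
      by (rule ec_add_on_curve[OF to_uv_on_curve curve2[OF z]]) (use assms(2,3) z in auto)
  qed
  have "uv_valence 3 G z" if z: "z \<in> U" for z
  proof -
    have th: "fst z \<in> {0<..<pi}" using assms(2) z by auto
    obtain dE where rate: "moves_at_rate A B (Hred A B) dE 1 to_uv z"
      using to_uv_moves_at_rate[OF th] by blast
    have v: "snd (to_uv z) \<noteq> 0" and ne: "fst (to_uv z) \<noteq> fst (ec_double A B (Hred A B z) (to_uv z))"
      using assms(3) z by auto
    have "moves_at_rate A B (Hred A B) dE (1 + 2 * 1) G z"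
      unfolding G_def ec_triple_def
      by (rule ec_add_moves_at_rate[OF rate ec_double_moves_at_rate[OF rate to_uv_on_curve[OF th] v]
            to_uv_on_curve[OF th] curve2[OF z] ne])
    from uv_valence_of_moves_at_rate[OF this moves_at_rate_gradient_nonzero[OF rate _ v] assms(1) z curve]
    show ?thesis by simp
  qed
  with curve assms(3) show ?thesis
    unfolding G_def by (intro canonical_valence_from_uv) blast
qed

theorem proposition1:
  fixes A B :: real
  shows
   "(\<forall>z. fst z \<in> {0<..<pi} \<longrightarrow> on_curve A B (Hred A B z) (to_uv z))
    \<and>
    (\<forall>(U :: (real \<times> real) set) (lam :: real) (mu :: real \<times> real \<Rightarrow> real).
       open U \<and> U \<subseteq> {0<..<pi} \<times> UNIV \<and>
       (\<forall>z\<in>U. (mu z)\<^sup>2 = fE A B (Hred A B z) lam \<and> mu z \<noteq> 0 \<and> mu differentiable (at z)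
               \<and> fst (to_uv z) \<noteq> lam
               \<and> \<bar>fst (ec_add (Hred A B z) (to_uv z) (lam, mu z))\<bar> < 1)
       \<longrightarrow> (let T = (\<lambda>z. from_uv (ec_add (Hred A B z) (to_uv z) (lam, mu z)))
            in canonical_valence 1 T U \<and> (\<forall>z\<in>U. Hred A B (T z) = Hred A B z)))
    \<and>
    (\<forall>U :: (real \<times> real) set.
       open U \<and> U \<subseteq> {0<..<pi} \<times> UNIV \<and>
       (\<forall>z\<in>U. snd (to_uv z) \<noteq> 0
               \<and> \<bar>fst (ec_double A B (Hred A B z) (to_uv z))\<bar> < 1)
       \<longrightarrow> (let T = (\<lambda>z. from_uv (ec_double A B (Hred A B z) (to_uv z)))
            in canonical_valence 2 T U \<and> (\<forall>z\<in>U. Hred A B (T z) = Hred A B z)))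
    \<and>
    (\<forall>U :: (real \<times> real) set.
       open U \<and> U \<subseteq> {0<..<pi} \<times> UNIV \<and>
       (\<forall>z\<in>U. snd (to_uv z) \<noteq> 0
               \<and> fst (ec_double A B (Hred A B z) (to_uv z)) \<noteq> fst (to_uv z)
               \<and> \<bar>fst (ec_triple A B (Hred A B z) (to_uv z))\<bar> < 1)
       \<longrightarrow> (let T = (\<lambda>z. from_uv (ec_triple A B (Hred A B z) (to_uv z)))
            in canonical_valence 3 T U \<and> (\<forall>z\<in>U. Hred A B (T z) = Hred A B z)))"
proof (intro conjI allI impI; (elim conjE)?)
  fix z :: "real \<times> real" assume "fst z \<in> {0<..<pi}"
  then show "on_curve A B (Hred A B z) (to_uv z)" by (rule to_uv_on_curve)
qed (unfold Let_def; rule addition_map_canonical doubling_map_canonical tripling_map_canonical; assumption)+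

end
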